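(* Let $n\in\mathbb{N}$, $m\in\{1,\dots,n\}$ and $\alpha\in[0,1]$. In the additive noise ordinal optimisation model (see context), the success probability satisfies $$1-(1-\alpha)^{m}\;\le\; p^{\mathrm{A}}_{\mathrm{success}}(n,m,\alpha)\;\le\; 1-(1-\alpha)^{n}.$$
   Context: Ordinal optimisation model: let $(Z_1,X_1),\dots,(Z_n,X_n)$ be i.i.d. copies of a pair $(Z,X)$ of real random variables. Order the observations $Z_1,\dots,Z_n$ increasingly as $Z_{1:n}\le\dots\le Z_{n:n}$ and, for $i=1,\dots,m$, let $X_{\langle i\rangle}$ denote the $X$-value paired with $Z_{i:n}$ (the concomitant). Let $x^*_\alpha$ be the $\alpha$-quantile of $X$ (so $\Pr(X\le x^*_\alpha)=\alpha$ for continuous $X$). The success probability is $$p_{\mathrm{success}}(n,m,\alpha)=\Pr\Big(\min_{1\le i\le m}X_{\langle i\rangle}\le x^*_\alpha\Big).$$ Additive noise model: $Z_i=X_i+Y_i$ where $X_i$ and $Y_i$ are independent continuous random variables (with $(X_i,Y_i)$ i.i.d. over $i$); the success probability in this model is denoted $p^{\mathrm{A}}_{\mathrm{success}}(n,m,\alpha)$. *)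

theory Defs
  imports "HOL-Probability.Probability"
begin

text \<open>Sample space of the additive noise model with n observations:
  \<omega> i = (X_i, Y_i), i < n, i.i.d. with law \<mu> \<Otimes> \<nu> (X and Y independent).
  Then Z_i = X_i + Y_i.\<close>

definition add_noise_space :: "real measure \<Rightarrow> real measure \<Rightarrow> nat \<Rightarrow> (nat \<Rightarrow> real \<times> real) measure" where
  "add_noise_space \<mu> \<nu> n = PiM {..<n} (\<lambda>_. \<mu> \<Otimes>\<^sub>M \<nu>)"

text \<open>0-based position of index i in the increasing (stable) ordering of z_0,...,z_{n-1};
  Z_i is Z_{(zrank+1):n}. Ties are broken by index (they have probability zero).\<close>

definition zrank :: "nat \<Rightarrow> (nat \<Rightarrow> real) \<Rightarrow> nat \<Rightarrow> nat" where
  "zrank n z i = card {j. j < n \<and> (z j < z i \<or> (z j = z i \<and> j < i))}"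

text \<open>Success event: min of the concomitants X_<1>,...,X_<m> is \<le> x.\<close>

definition success_event_A :: "real measure \<Rightarrow> real measure \<Rightarrow> nat \<Rightarrow> nat \<Rightarrow> ereal \<Rightarrow> (nat \<Rightarrow> real \<times> real) set" where
  "success_event_A \<mu> \<nu> n m x =
     {\<omega> \<in> space (add_noise_space \<mu> \<nu> n).
        \<exists>i<n. zrank n (\<lambda>j. fst (\<omega> j) + snd (\<omega> j)) i < m \<and> ereal (fst (\<omega> i)) \<le> x}"

definition p_success_A :: "real measure \<Rightarrow> real measure \<Rightarrow> nat \<Rightarrow> nat \<Rightarrow> ereal \<Rightarrow> real" where
  "p_success_A \<mu> \<nu> n m x = measure (add_noise_space \<mu> \<nu> n) (success_event_A \<mu> \<nu> n m x)"

end

theory Submission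
  imports Defs
begin

(* On the failure event, each of the m observations with the smallest Z = X + Y has X > x. Then so
   does each of the m observations with the smallest noise Y: if such an index k had X k \<le> x, every
   index j among the m smallest Z would satisfy X j > X k and Z j \<le> Z k, hence Y j < Y k, placing m
   indices below k in the noise ordering. Which indices carry the m smallest noises depends only on
   the noise vector, which is independent of the X's, so the X's there all exceed x with probability
   exactly (1 - \<alpha>)^m. This gives the lower bound; the upper bound holds because success needs some
   X i \<le> x. *)

lemma PiE_snd_fst_eq_PiE_Times:
  assumes "\<And>i. i \<in> I \<Longrightarrow> F i \<subseteq> space (M i)" "\<And>i. i \<in> I \<Longrightarrow> A i \<subseteq> space (N i)"
  shows "{\<omega> \<in> space (PiM I (\<lambda>i. M i \<Otimes>\<^sub>M N i)). (\<lambda>i\<in>I. snd (\<omega> i)) \<in> Pi\<^sub>E I A \<and> (\<forall>i\<in>I. fst (\<omega> i) \<in> F i)}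
    = Pi\<^sub>E I (\<lambda>i. F i \<times> A i)"
proof (intro set_eqI iffI)
  fix \<omega> assume "\<omega> \<in> Pi\<^sub>E I (\<lambda>i. F i \<times> A i)"
  then have "\<omega> \<in> extensional I" and "\<forall>i\<in>I. fst (\<omega> i) \<in> F i \<and> snd (\<omega> i) \<in> A i"
    by (auto simp: PiE_iff mem_Times_iff)
  then show "\<omega> \<in> {\<omega> \<in> space (PiM I (\<lambda>i. M i \<Otimes>\<^sub>M N i)). (\<lambda>i\<in>I. snd (\<omega> i)) \<in> Pi\<^sub>E I A \<and> (\<forall>i\<in>I. fst (\<omega> i) \<in> F i)}"
    using assms by (auto simp: space_PiM PiE_iff space_pair_measure mem_Times_iff) blast
qed (auto simp: space_PiM PiE_iff space_pair_measure mem_Times_iff)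

lemma emeasure_PiM_pair_snd_fst:
  fixes M :: "'i \<Rightarrow> 'a measure" and N :: "'i \<Rightarrow> 'b measure"
  assumes I: "finite I" and M: "\<And>i. prob_space (M i)" and N: "\<And>i. prob_space (N i)"
    and C: "C \<in> sets (PiM I N)" and F: "\<And>i. i \<in> I \<Longrightarrow> F i \<in> sets (M i)"
  shows "emeasure (PiM I (\<lambda>i. M i \<Otimes>\<^sub>M N i))
      {\<omega> \<in> space (PiM I (\<lambda>i. M i \<Otimes>\<^sub>M N i)). (\<lambda>i\<in>I. snd (\<omega> i)) \<in> C \<and> (\<forall>i\<in>I. fst (\<omega> i) \<in> F i)}
    = emeasure (PiM I N) C * (\<Prod>i\<in>I. emeasure (M i) (F i))"
proof -
  let ?P = "PiM I (\<lambda>i. M i \<Otimes>\<^sub>M N i)" and ?Y = "\<lambda>\<omega>. \<lambda>i\<in>I. snd (\<omega> i)"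
  define B where "B = {\<omega> \<in> space ?P. \<forall>i\<in>I. fst (\<omega> i) \<in> F i}"
  define c where "c = (\<Prod>i\<in>I. emeasure (M i) (F i))"
  interpret MN: product_prob_space "\<lambda>i. M i \<Otimes>\<^sub>M N i"
    by (simp add: product_prob_space_def product_prob_space_axioms_def product_sigma_finite_def
        prob_space_imp_sigma_finite prob_space_pair M N)
  interpret N: product_prob_space N
    by (simp add: product_prob_space_def product_prob_space_axioms_def product_sigma_finite_def
        prob_space_imp_sigma_finite N)
  have Y: "?Y \<in> measurable ?P (PiM I N)"
    by measurable
  have X: "(\<lambda>\<omega>. \<lambda>i\<in>I. fst (\<omega> i)) \<in> measurable ?P (PiM I M)"
    by measurable
  have "B = (\<lambda>\<omega>. \<lambda>i\<in>I. fst (\<omega> i)) -` Pi\<^sub>E I F \<inter> space ?P"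
    unfolding B_def by auto
  then have B: "B \<in> sets ?P"
    using measurable_sets[OF X] F I by (simp add: sets_PiM_I_finite)
  have event: "{\<omega> \<in> space ?P. ?Y \<omega> \<in> X \<and> (\<forall>i\<in>I. fst (\<omega> i) \<in> F i)} = B \<inter> (?Y -` X \<inter> space ?P)" for X
    unfolding B_def by blast
  \<comment> \<open>Both sides, as functions of C, are finite measures agreeing on the rectangles.\<close>
  have "distr (density ?P (indicator B)) (PiM I N) ?Y = density (PiM I N) (\<lambda>_. c)"
  proof (rule measure_eqI_PiM_finite[OF I, where A="\<lambda>_. space (PiM I N)"])
    show "sets (distr (density ?P (indicator B)) (PiM I N) ?Y) = sets (PiM I N)"
      "sets (density (PiM I N) (\<lambda>_. c)) = sets (PiM I N)" by simp_all
  next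
    fix A assume A: "\<And>i. i \<in> I \<Longrightarrow> A i \<in> sets (N i)"
    have rectangle: "B \<inter> (?Y -` Pi\<^sub>E I A \<inter> space ?P) = Pi\<^sub>E I (\<lambda>i. F i \<times> A i)"
      unfolding event[symmetric] using A F by (intro PiE_snd_fst_eq_PiE_Times) (simp_all add: sets.sets_into_space)
    have "emeasure (distr (density ?P (indicator B)) (PiM I N) ?Y) (Pi\<^sub>E I A)
        = emeasure ?P (Pi\<^sub>E I (\<lambda>i. F i \<times> A i))"
      using Y B A I
      by (simp add: emeasure_distr emeasure_restricted measurable_sets sets_PiM_I_finite rectangle)
    also have "\<dots> = (\<Prod>i\<in>I. emeasure (M i) (F i) * emeasure (N i) (A i))"
      using A F I by (simp add: MN.emeasure_PiM prob_space_imp_sigma_finite N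
          sigma_finite_measure.emeasure_pair_measure_Times)
    also have "\<dots> = emeasure (density (PiM I N) (\<lambda>_. c)) (Pi\<^sub>E I A)"
      using A I by (simp add: emeasure_density_const sets_PiM_I_finite N.emeasure_PiM c_def prod.distrib)
    finally show "emeasure (distr (density ?P (indicator B)) (PiM I N) ?Y) (Pi\<^sub>E I A)
        = emeasure (density (PiM I N) (\<lambda>_. c)) (Pi\<^sub>E I A)" .
  next
    show "emeasure (distr (density ?P (indicator B)) (PiM I N) ?Y) (space (PiM I N)) \<noteq> \<infinity>" for i :: nat
      using Y B by (simp add: emeasure_distr emeasure_restricted MN.P.emeasure_eq_measure)
  qed (auto simp: space_PiM space_in_prod_algebra)
  then have "emeasure (distr (density ?P (indicator B)) (PiM I N) ?Y) C
      = emeasure (density (PiM I N) (\<lambda>_. c)) C"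
    by simp
  then have "emeasure ?P (B \<inter> (?Y -` C \<inter> space ?P)) = c * emeasure (PiM I N) C"
    using C Y B by (simp add: emeasure_distr emeasure_restricted measurable_sets emeasure_density_const)
  then show ?thesis
    by (simp add: event c_def mult.commute)
qed

definition precedes :: "(nat \<Rightarrow> real) \<Rightarrow> nat \<Rightarrow> nat \<Rightarrow> bool" where
  "precedes z j i \<longleftrightarrow> z j < z i \<or> (z j = z i \<and> j < i)"

lemma zrank_eq_card_precedes: "zrank n z i = card {j. j < n \<and> precedes z j i}"
  unfolding zrank_def precedes_def ..

lemma precedes_trans: "precedes z i j \<Longrightarrow> precedes z j k \<Longrightarrow> precedes z i k"
  unfolding precedes_def by auto

lemma not_precedes_self: "\<not> precedes z i i"
  unfolding precedes_def by simp

lemma precedes_total: "i \<noteq> j \<Longrightarrow> precedes z i j \<or> precedes z j i"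
  unfolding precedes_def by auto

lemma zrank_less_zrank:
  assumes "j < n" and "precedes z j i"
  shows "zrank n z j < zrank n z i"
  unfolding zrank_eq_card_precedes
proof (rule psubset_card_mono)
  have "j \<in> {k. k < n \<and> precedes z k i}" "j \<notin> {k. k < n \<and> precedes z k j}"
    using assms by (simp_all add: not_precedes_self)
  moreover have "{k. k < n \<and> precedes z k j} \<subseteq> {k. k < n \<and> precedes z k i}"
    using assms(2) by (auto intro: precedes_trans)
  ultimately show "{k. k < n \<and> precedes z k j} \<subset> {k. k < n \<and> precedes z k i}"
    by blast
qed simp

lemma zrank_less:
  assumes "i < n"
  shows "zrank n z i < n"
proof -
  have "{j. j < n \<and> precedes z j i} \<subseteq> {..<n} - {i}"
    by (auto simp: not_precedes_self)
  then have "zrank n z i \<le> card ({..<n} - {i})"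
    unfolding zrank_eq_card_precedes by (intro card_mono) auto
  with assms show ?thesis
    by simp
qed

lemma bij_betw_zrank: "bij_betw (zrank n z) {..<n} {..<n}"
proof -
  have "inj_on (zrank n z) {..<n}"
  proof (rule inj_onI)
    fix i j assume "i \<in> {..<n}" "j \<in> {..<n}" "zrank n z i = zrank n z j"
    then show "i = j"
      using zrank_less_zrank[of i n z j] zrank_less_zrank[of j n z i] precedes_total[of i j z]
      by fastforce
  qed
  moreover have "zrank n z ` {..<n} \<subseteq> {..<n}"
    using zrank_less by auto
  ultimately show ?thesis
    by (simp add: bij_betw_def card_image card_subset_eq)
qed

definition smallest_indices :: "nat \<Rightarrow> nat \<Rightarrow> (nat \<Rightarrow> real) \<Rightarrow> nat set" where
  "smallest_indices n m z = {i. i < n \<and> zrank n z i < m}"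

lemma smallest_indices_subset: "smallest_indices n m z \<subseteq> {..<n}"
  unfolding smallest_indices_def by auto

lemma card_smallest_indices:
  assumes "m \<le> n"
  shows "card (smallest_indices n m z) = m"
proof -
  have "zrank n z ` smallest_indices n m z = {..<m}"
  proof
    show "zrank n z ` smallest_indices n m z \<subseteq> {..<m}"
      by (auto simp: smallest_indices_def)
  next
    show "{..<m} \<subseteq> zrank n z ` smallest_indices n m z"
    proof
      fix r assume "r \<in> {..<m}"
      then have "r \<in> zrank n z ` {..<n}"
        using assms bij_betw_imp_surj_on[OF bij_betw_zrank] by auto
      with \<open>r \<in> {..<m}\<close> show "r \<in> zrank n z ` smallest_indices n m z"
        by (auto simp: smallest_indices_def)
    qed
  qed
  then have "bij_betw (zrank n z) (smallest_indices n m z) {..<m}"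
    by (rule bij_betw_subset[OF bij_betw_zrank smallest_indices_subset])
  then show ?thesis
    by (simp add: bij_betw_same_card)
qed

lemma zrank_cong: "(\<And>j. j < n \<Longrightarrow> z j = z' j) \<Longrightarrow> i < n \<Longrightarrow> zrank n z i = zrank n z' i"
  unfolding zrank_def by (intro arg_cong[where f=card]) auto

lemma smallest_indices_cong:
  assumes "\<And>j. j < n \<Longrightarrow> z j = z' j"
  shows "smallest_indices n m z = smallest_indices n m z'"
  using zrank_cong[OF assms] unfolding smallest_indices_def by auto

lemma concomitant_above_threshold:
  fixes X Y :: "nat \<Rightarrow> real" and x :: ereal
  assumes "m \<le> n"
    and above: "\<forall>i \<in> smallest_indices n m (\<lambda>j. X j + Y j). x < ereal (X i)"
    and k: "k \<in> smallest_indices n m Y"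
  shows "x < ereal (X k)"
proof (rule ccontr)
  assume not_above: "\<not> x < ereal (X k)"
  let ?Z = "\<lambda>j. X j + Y j"
  have "k < n"
    using k by (simp add: smallest_indices_def)
  have "k \<notin> smallest_indices n m ?Z"
    using above not_above by blast
  with \<open>k < n\<close> have Zk: "m \<le> zrank n ?Z k"
    by (simp add: smallest_indices_def)
  have "smallest_indices n m ?Z \<subseteq> {j. j < n \<and> precedes Y j k}"
  proof
    fix j assume j: "j \<in> smallest_indices n m ?Z"
    then have "j < n" and Zj: "zrank n ?Z j < m"
      by (simp_all add: smallest_indices_def)
    have "\<not> precedes ?Z k j"
    proof
      assume "precedes ?Z k j"
      then have "zrank n ?Z k < zrank n ?Z j"
        by (rule zrank_less_zrank[OF \<open>k < n\<close>])
      with Zk Zj show False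
        by simp
    qed
    moreover have "X k < X j"
    proof -
      have "ereal (X k) \<le> x"
        using not_above by (simp add: not_less)
      also have "x < ereal (X j)"
        using above j by blast
      finally show ?thesis
        by simp
    qed
    ultimately show "j \<in> {j. j < n \<and> precedes Y j k}"
      using \<open>j < n\<close> by (auto simp: precedes_def)
  qed
  then have "card (smallest_indices n m ?Z) \<le> zrank n Y k"
    unfolding zrank_eq_card_precedes by (intro card_mono) auto
  then have "m \<le> zrank n Y k"
    using card_smallest_indices[OF \<open>m \<le> n\<close>] by simp
  with k show False
    by (simp add: smallest_indices_def)
qed

lemma sets_zrank_less:
  assumes "\<And>j. j < n \<Longrightarrow> (\<lambda>\<omega>. z \<omega> j) \<in> borel_measurable M" and "i < n"
  shows "{\<omega> \<in> space M. zrank n (z \<omega>) i < m} \<in> sets M"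
proof -
  have "(\<lambda>\<omega>. \<Sum>j<n. if precedes (z \<omega>) j i then 1 else 0 :: real) \<in> borel_measurable M"
  proof (rule borel_measurable_sum)
    fix j assume "j \<in> {..<n}"
    then have [measurable]: "(\<lambda>\<omega>. z \<omega> j) \<in> borel_measurable M" "(\<lambda>\<omega>. z \<omega> i) \<in> borel_measurable M"
      using assms by auto
    show "(\<lambda>\<omega>. if precedes (z \<omega>) j i then 1 else 0 :: real) \<in> borel_measurable M"
      unfolding precedes_def by measurable
  qed
  moreover have "real (zrank n (z \<omega>) i) = (\<Sum>j<n. if precedes (z \<omega>) j i then 1 else 0)" for \<omega>
    unfolding zrank_eq_card_precedes by (simp add: sum.If_cases Int_def)
  ultimately have "(\<lambda>\<omega>. real (zrank n (z \<omega>) i)) \<in> borel_measurable M"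
    by simp
  then have "{\<omega> \<in> space M. real (zrank n (z \<omega>) i) < real m} \<in> sets M"
    by measurable
  then show ?thesis
    by simp
qed

lemma sets_smallest_indices_eq:
  assumes "\<And>j. j < n \<Longrightarrow> (\<lambda>\<omega>. z \<omega> j) \<in> borel_measurable M" and "K \<subseteq> {..<n}"
  shows "{\<omega> \<in> space M. smallest_indices n m (z \<omega>) = K} \<in> sets M"
proof -
  have "{\<omega> \<in> space M. smallest_indices n m (z \<omega>) = K}
      = {\<omega> \<in> space M. \<forall>i\<in>{..<n}. zrank n (z \<omega>) i < m \<longleftrightarrow> i \<in> K}"
    using assms(2) by (auto simp: smallest_indices_def)
  also have "\<dots> \<in> sets M"
  proof (rule sets.sets_Collect_finite_All)
    fix i assume "i \<in> {..<n}"
    then have "{\<omega> \<in> space M. zrank n (z \<omega>) i < m} \<in> sets M"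
      by (intro sets_zrank_less assms(1)) auto
    then show "{\<omega> \<in> space M. zrank n (z \<omega>) i < m \<longleftrightarrow> i \<in> K} \<in> sets M"
      by (cases "i \<in> K") (simp_all add: sets.sets_Collect_neg)
  qed simp
  finally show ?thesis .
qed

locale additive_noise_model =
  fixes \<mu> \<nu> :: "real measure" and n :: nat
  assumes prob_space_\<mu>: "prob_space \<mu>" and sets_\<mu>: "sets \<mu> = sets borel"
    and prob_space_\<nu>: "prob_space \<nu>" and sets_\<nu>: "sets \<nu> = sets borel"
begin

sublocale prob_space "add_noise_space \<mu> \<nu> n"
  unfolding add_noise_space_def by (intro prob_space_PiM prob_space_pair prob_space_\<mu> prob_space_\<nu>)

abbreviation "\<Omega> \<equiv> space (add_noise_space \<mu> \<nu> n)"

abbreviation "noise_space \<equiv> PiM {..<n} (\<lambda>_. \<nu>)"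

interpretation \<mu>: prob_space \<mu>
  by (rule prob_space_\<mu>)

interpretation N: prob_space noise_space
  by (intro prob_space_PiM prob_space_\<nu>)

definition noise :: "(nat \<Rightarrow> real \<times> real) \<Rightarrow> nat \<Rightarrow> real" where
  "noise \<omega> = (\<lambda>i\<in>{..<n}. snd (\<omega> i))"

lemma measurable_noise: "noise \<in> measurable (add_noise_space \<mu> \<nu> n) noise_space"
  unfolding noise_def add_noise_space_def by measurable

lemma measurable_observation:
  "i < n \<Longrightarrow> (\<lambda>\<omega>. \<omega> i) \<in> measurable (add_noise_space \<mu> \<nu> n) (borel \<Otimes>\<^sub>M borel)"
  unfolding add_noise_space_def measurable_cong_sets[OF refl sets_pair_measure_cong[OF sets_\<mu> sets_\<nu>], symmetric]
  by (rule measurable_component_singleton) simp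

lemma borel_measurable_fst_component: "i < n \<Longrightarrow> (\<lambda>\<omega>. fst (\<omega> i)) \<in> borel_measurable (add_noise_space \<mu> \<nu> n)"
  using measurable_observation by measurable

lemma borel_measurable_snd_component: "i < n \<Longrightarrow> (\<lambda>\<omega>. snd (\<omega> i)) \<in> borel_measurable (add_noise_space \<mu> \<nu> n)"
  using measurable_observation by measurable

lemma events_success_event_A: "success_event_A \<mu> \<nu> n m x \<in> events"
proof -
  have "success_event_A \<mu> \<nu> n m x = {\<omega> \<in> \<Omega>.
      \<exists>i\<in>{..<n}. zrank n (\<lambda>j. fst (\<omega> j) + snd (\<omega> j)) i < m \<and> ereal (fst (\<omega> i)) \<le> x}"
    unfolding success_event_A_def by auto
  also have "\<dots> \<in> events"
  proof (intro sets.sets_Collect_finite_Ex sets.sets_Collect_conj finite_lessThan)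
    fix i assume "i \<in> {..<n}"
    then show "{\<omega> \<in> \<Omega>. zrank n (\<lambda>j. fst (\<omega> j) + snd (\<omega> j)) i < m} \<in> events"
      by (intro sets_zrank_less borel_measurable_add borel_measurable_fst_component
          borel_measurable_snd_component) auto
    have [measurable]: "(\<lambda>\<omega>. fst (\<omega> i)) \<in> borel_measurable (add_noise_space \<mu> \<nu> n)"
      using \<open>i \<in> {..<n}\<close> by (simp add: borel_measurable_fst_component)
    show "{\<omega> \<in> \<Omega>. ereal (fst (\<omega> i)) \<le> x} \<in> events"
      by measurable
  qed
  finally show ?thesis .
qed

lemma prob_noise_fst_in:
  assumes C: "C \<in> sets noise_space" and K: "K \<subseteq> {..<n}" and D: "D \<in> sets borel"
  shows "prob {\<omega> \<in> \<Omega>. noise \<omega> \<in> C \<and> (\<forall>k\<in>K. fst (\<omega> k) \<in> D)}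
    = measure noise_space C * measure \<mu> D ^ card K"
proof -
  define F where "F i = (if i \<in> K then D else space \<mu>)" for i
  have F: "F i \<in> sets \<mu>" for i
    using D[folded sets_\<mu>] by (simp add: F_def)
  have "{\<omega> \<in> \<Omega>. noise \<omega> \<in> C \<and> (\<forall>k\<in>K. fst (\<omega> k) \<in> D)}
      = {\<omega> \<in> space (PiM {..<n} (\<lambda>_. \<mu> \<Otimes>\<^sub>M \<nu>)). (\<lambda>i\<in>{..<n}. snd (\<omega> i)) \<in> C \<and> (\<forall>i\<in>{..<n}. fst (\<omega> i) \<in> F i)}"
    using K by (auto simp: noise_def add_noise_space_def F_def space_PiM PiE_iff space_pair_measure
        mem_Times_iff)
  also have "emeasure (add_noise_space \<mu> \<nu> n) \<dots>
      = emeasure noise_space C * (\<Prod>i<n. emeasure \<mu> (F i))"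
    unfolding add_noise_space_def
    by (rule emeasure_PiM_pair_snd_fst) (use C F prob_space_\<mu> prob_space_\<nu> in auto)
  also have "(\<Prod>i<n. emeasure \<mu> (F i)) = (\<Prod>i<n. if i \<in> K then emeasure \<mu> D else 1)"
    by (intro prod.cong) (simp_all add: F_def \<mu>.emeasure_space_1)
  also have "\<dots> = emeasure \<mu> D ^ card K"
    using K by (simp add: prod.inter_restrict[symmetric] Int_absorb1)
  finally show ?thesis
    using D by (simp add: emeasure_eq_measure N.emeasure_eq_measure \<mu>.emeasure_eq_measure
        sets_\<mu> ennreal_power ennreal_mult[symmetric])
qed

lemma events_fst_component_in:
  assumes "i < n" and "D \<in> sets borel"
  shows "{\<omega> \<in> \<Omega>. fst (\<omega> i) \<in> D} \<in> events"
proof -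
  have "{\<omega> \<in> \<Omega>. fst (\<omega> i) \<in> D}
      = (\<lambda>\<omega>. fst (\<omega> i)) -` D \<inter> \<Omega>"
    by blast
  then show ?thesis
    using measurable_sets[OF borel_measurable_fst_component[OF assms(1)] assms(2)] by simp
qed

lemma prob_all_fst_in:
  assumes "D \<in> sets borel"
  shows "prob {\<omega> \<in> \<Omega>. \<forall>i<n. fst (\<omega> i) \<in> D} = measure \<mu> D ^ n"
proof -
  have "{\<omega> \<in> \<Omega>. \<forall>i<n. fst (\<omega> i) \<in> D}
      = {\<omega> \<in> \<Omega>. noise \<omega> \<in> space noise_space \<and> (\<forall>i\<in>{..<n}. fst (\<omega> i) \<in> D)}"
    using measurable_space[OF measurable_noise] by auto
  then show ?thesis
    using prob_noise_fst_in[of "space noise_space" "{..<n}" D] assms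
    by (simp add: N.prob_space)
qed

lemma events_noise_fst_in:
  assumes C: "C \<in> sets noise_space" and K: "K \<subseteq> {..<n}" and D: "D \<in> sets borel"
  shows "{\<omega> \<in> \<Omega>. noise \<omega> \<in> C \<and> (\<forall>k\<in>K. fst (\<omega> k) \<in> D)} \<in> events"
proof -
  have "{\<omega> \<in> \<Omega>. noise \<omega> \<in> C \<and> (\<forall>k\<in>K. fst (\<omega> k) \<in> D)}
      = noise -` C \<inter> \<Omega> \<inter> {\<omega> \<in> \<Omega>. \<forall>k\<in>K. fst (\<omega> k) \<in> D}"
    by auto
  moreover have "{\<omega> \<in> \<Omega>. \<forall>k\<in>K. fst (\<omega> k) \<in> D} \<in> events"
    using K D by (intro sets.sets_Collect_finite_All events_fst_component_in) (auto intro: finite_subset)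
  ultimately show ?thesis
    using measurable_sets[OF measurable_noise C] by auto
qed

lemma sets_noise_space_smallest_indices_eq:
  assumes "K \<subseteq> {..<n}"
  shows "{y \<in> space noise_space. smallest_indices n m y = K} \<in> sets noise_space"
proof -
  have "(\<lambda>y. y j) \<in> borel_measurable noise_space" if "j < n" for j
    using measurable_component_singleton[of j "{..<n}" "\<lambda>_. \<nu>"] that
    by (simp add: measurable_cong_sets[OF refl sets_\<nu>])
  then show ?thesis
    using assms by (intro sets_smallest_indices_eq) auto
qed

lemma prob_smallest_noise_fst_in:
  assumes "m \<le> n" and D: "D \<in> sets borel"
  shows "prob {\<omega> \<in> \<Omega>. \<forall>k \<in> smallest_indices n m (noise \<omega>). fst (\<omega> k) \<in> D}
    = measure \<mu> D ^ m"
proof -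
  \<comment> \<open>Split according to the set K of indices carrying the m smallest noises.\<close>
  define \<K> where "\<K> = {K. K \<subseteq> {..<n} \<and> card K = m}"
  define C where "C K = {y \<in> space noise_space. smallest_indices n m y = K}" for K
  define E where "E K = {\<omega> \<in> \<Omega>. noise \<omega> \<in> C K \<and> (\<forall>k\<in>K. fst (\<omega> k) \<in> D)}" for K
  have smallest_\<K>: "smallest_indices n m y \<in> \<K>" for y
    using smallest_indices_subset card_smallest_indices[OF \<open>m \<le> n\<close>] by (simp add: \<K>_def)
  have "finite \<K>"
    unfolding \<K>_def by (rule finite_subset[of _ "Pow {..<n}"]) auto
  have C: "C K \<in> sets noise_space" if "K \<in> \<K>" for K
    using that unfolding C_def \<K>_def by (intro sets_noise_space_smallest_indices_eq) simp
  have E: "E K \<in> events" if "K \<in> \<K>" for K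
    using that C D unfolding E_def \<K>_def by (intro events_noise_fst_in) auto
  have "{\<omega> \<in> \<Omega>. \<forall>k \<in> smallest_indices n m (noise \<omega>). fst (\<omega> k) \<in> D}
      = (\<Union>K\<in>\<K>. E K)"
  proof (intro set_eqI iffI)
    fix \<omega> assume \<omega>: "\<omega> \<in> {\<omega> \<in> \<Omega>. \<forall>k \<in> smallest_indices n m (noise \<omega>). fst (\<omega> k) \<in> D}"
    then have "\<omega> \<in> E (smallest_indices n m (noise \<omega>))"
      using measurable_space[OF measurable_noise] by (simp add: E_def C_def)
    then show "\<omega> \<in> (\<Union>K\<in>\<K>. E K)"
      using smallest_\<K> by blast
  qed (auto simp: E_def C_def)
  also have "prob \<dots> = (\<Sum>K\<in>\<K>. prob (E K))"
    using \<open>finite \<K>\<close> E by (intro finite_measure_finite_Union) (auto simp: disjoint_family_on_def E_def C_def)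
  also have "\<dots> = (\<Sum>K\<in>\<K>. N.prob (C K) * measure \<mu> D ^ m)"
  proof (rule sum.cong[OF refl])
    fix K assume "K \<in> \<K>"
    then show "prob (E K) = N.prob (C K) * measure \<mu> D ^ m"
      unfolding E_def using prob_noise_fst_in[OF C[OF \<open>K \<in> \<K>\<close>] _ D] by (simp add: \<K>_def)
  qed
  also have "\<dots> = (\<Sum>K\<in>\<K>. N.prob (C K)) * measure \<mu> D ^ m"
    by (rule sum_distrib_right[symmetric])
  also have "(\<Sum>K\<in>\<K>. N.prob (C K)) = N.prob (\<Union>K\<in>\<K>. C K)"
    using \<open>finite \<K>\<close> C
    by (intro N.finite_measure_finite_Union[symmetric]) (auto simp: disjoint_family_on_def C_def)
  also have "(\<Union>K\<in>\<K>. C K) = space noise_space"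
    using smallest_\<K> by (auto simp: C_def)
  finally show ?thesis
    by (simp add: N.prob_space)
qed

lemma events_smallest_noise_fst_in:
  assumes "D \<in> sets borel"
  shows "{\<omega> \<in> \<Omega>. \<forall>k \<in> smallest_indices n m (noise \<omega>). fst (\<omega> k) \<in> D} \<in> events"
proof -
  have "{\<omega> \<in> \<Omega>. \<forall>k \<in> smallest_indices n m (noise \<omega>). fst (\<omega> k) \<in> D}
      = {\<omega> \<in> \<Omega>. \<forall>k\<in>{..<n}. zrank n (noise \<omega>) k < m \<longrightarrow> fst (\<omega> k) \<in> D}"
    by (auto simp: smallest_indices_def)
  also have "\<dots> \<in> events"
  proof (intro sets.sets_Collect_finite_All sets.sets_Collect_imp finite_lessThan)
    fix k assume "k \<in> {..<n}"
    then show "{\<omega> \<in> \<Omega>. fst (\<omega> k) \<in> D} \<in> events"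
      using assms by (intro events_fst_component_in) auto
    have "(\<lambda>\<omega>. noise \<omega> j) \<in> borel_measurable (add_noise_space \<mu> \<nu> n)" if "j < n" for j
      using borel_measurable_snd_component[OF that] that
      by (simp add: noise_def)
    with \<open>k \<in> {..<n}\<close> show "{\<omega> \<in> \<Omega>. zrank n (noise \<omega>) k < m} \<in> events"
      by (intro sets_zrank_less) auto
  qed
  finally show ?thesis .
qed

lemma p_success_A_le: "p_success_A \<mu> \<nu> n m x \<le> 1 - measure \<mu> {t. x < ereal t} ^ n"
proof -
  let ?D = "{t. x < ereal t}"
  let ?A = "{\<omega> \<in> \<Omega>. \<forall>i<n. fst (\<omega> i) \<in> ?D}"
  have D: "?D \<in> sets borel"
    by measurable
  have "?A = {\<omega> \<in> \<Omega>. \<forall>i\<in>{..<n}. fst (\<omega> i) \<in> ?D}"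
    by (simp only: Ball_def lessThan_iff)
  also have "\<dots> \<in> events"
    using D by (intro sets.sets_Collect_finite_All events_fst_component_in) auto
  finally have A: "?A \<in> events" .
  have "success_event_A \<mu> \<nu> n m x \<subseteq> \<Omega> - ?A"
  proof
    fix \<omega> assume "\<omega> \<in> success_event_A \<mu> \<nu> n m x"
    then obtain i where "\<omega> \<in> \<Omega>" "i < n" "\<not> x < ereal (fst (\<omega> i))"
      unfolding success_event_A_def not_less by blast
    then show "\<omega> \<in> \<Omega> - ?A"
      by blast
  qed
  then have "p_success_A \<mu> \<nu> n m x \<le> prob (\<Omega> - ?A)"
    unfolding p_success_A_def using A by (rule finite_measure_mono[OF _ sets.compl_sets])
  also have "\<dots> = 1 - prob ?A"
    by (rule prob_compl[OF A])
  also have "prob ?A = measure \<mu> ?D ^ n"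
    by (rule prob_all_fst_in[OF D])
  finally show ?thesis .
qed

lemma p_success_A_ge:
  assumes "m \<le> n"
  shows "1 - measure \<mu> {t. x < ereal t} ^ m \<le> p_success_A \<mu> \<nu> n m x"
proof -
  let ?S = "success_event_A \<mu> \<nu> n m x"
  have D: "{t. x < ereal t} \<in> sets borel"
    by measurable
  have "\<Omega> - ?S
      \<subseteq> {\<omega> \<in> \<Omega>. \<forall>k \<in> smallest_indices n m (noise \<omega>). fst (\<omega> k) \<in> {t. x < ereal t}}"
  proof
    fix \<omega> assume \<omega>: "\<omega> \<in> \<Omega> - ?S"
    have "\<forall>i \<in> smallest_indices n m (\<lambda>j. fst (\<omega> j) + snd (\<omega> j)). x < ereal (fst (\<omega> i))"
      using \<omega> unfolding success_event_A_def smallest_indices_def by (simp add: not_le)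
    moreover have "smallest_indices n m (noise \<omega>) = smallest_indices n m (\<lambda>j. snd (\<omega> j))"
      by (rule smallest_indices_cong) (simp add: noise_def)
    ultimately have "\<forall>k \<in> smallest_indices n m (noise \<omega>). x < ereal (fst (\<omega> k))"
      using concomitant_above_threshold[OF assms, where X = "\<lambda>j. fst (\<omega> j)" and Y = "\<lambda>j. snd (\<omega> j)"]
      by simp
    with \<omega> show "\<omega> \<in> {\<omega> \<in> \<Omega>. \<forall>k \<in> smallest_indices n m (noise \<omega>). fst (\<omega> k) \<in> {t. x < ereal t}}"
      by simp
  qed
  then have "prob (\<Omega> - ?S)
      \<le> prob {\<omega> \<in> \<Omega>. \<forall>k \<in> smallest_indices n m (noise \<omega>). fst (\<omega> k) \<in> {t. x < ereal t}}"
    by (rule finite_measure_mono[OF _ events_smallest_noise_fst_in[OF D]])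
  also have "\<dots> = measure \<mu> {t. x < ereal t} ^ m"
    by (rule prob_smallest_noise_fst_in[OF assms D])
  finally have "prob (\<Omega> - ?S) \<le> measure \<mu> {t. x < ereal t} ^ m" .
  then show ?thesis
    unfolding p_success_A_def using events_success_event_A by (simp add: prob_compl)
qed

end

theorem mainTheorem1:
  fixes \<mu> \<nu> :: "real measure" and n m :: nat and x :: ereal and \<alpha> :: real
  assumes "prob_space \<mu>" and "sets \<mu> = sets borel"
    and "prob_space \<nu>" and "sets \<nu> = sets borel"
    and "\<forall>t. measure \<mu> {t} = 0" and "\<forall>t. measure \<nu> {t} = 0"
    and "1 \<le> m" and "m \<le> n"
    and "\<alpha> = measure \<mu> {t. ereal t \<le> x}"
  shows "1 - (1 - \<alpha>) ^ m \<le> p_success_A \<mu> \<nu> n m x \<and> p_success_A \<mu> \<nu> n m x \<le> 1 - (1 - \<alpha>) ^ n"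
proof -
  interpret additive_noise_model \<mu> \<nu> n
    using assms(1-4) by (rule additive_noise_model.intro)
  interpret \<mu>: prob_space \<mu>
    by (rule assms(1))
  have "{t. ereal t \<le> x} \<in> sets \<mu>"
    unfolding assms(2) by measurable
  moreover have "{t. x < ereal t} = space \<mu> - {t. ereal t \<le> x}"
    using sets_eq_imp_space_eq[OF assms(2)] by auto
  ultimately have "measure \<mu> {t. x < ereal t} = 1 - \<alpha>"
    using assms(9) by (simp add: \<mu>.prob_compl)
  then show ?thesis
    using p_success_A_ge[OF assms(8), of x] p_success_A_le[of m x] by simp
qed

end
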